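(* Let $\mathcal C$ be a convex arc with total curvature $\int_{\mathcal C}\kappa\,ds\le\pi$ whose radius of curvature satisfies $R_1\le\rho\le R_2$ at every point, for constants $0<R_1\le R_2$. Let $\mathcal L$ be a lattice in $\mathbb R^2$ and let $\delta>0$ satisfy $$\delta<\frac{d_{\mathcal L}^2}{2\left(R_2+d_{\mathcal L}+\sqrt{(R_2+d_{\mathcal L})^2-d_{\mathcal L}^2}\right)}.$$ Let $L=\mathrm{Length}(\mathcal C)$. If $$\frac{L^3}{8R_1}+2L\delta+3\delta^2\le A_{\mathcal L},$$ then $$\#\{Q\in\mathcal L:\mathrm{dist}(Q,\mathcal C)<\delta\}\le 2.$$
   Context: A lattice is a set $\mathcal L=\mathcal L(v_0,v_1,v_2)=\{v_0+mv_1+nv_2: m,n\in\mathbb Z\}$ where $v_0,v_1,v_2\in\mathbb R^2$ and $v_1,v_2$ are linearly independent; $A_{\mathcal L}=|\det(v_1,v_2)|$ and $d_{\mathcal L}=\min\{\|P-Q\|:P,Q\in\mathcal L,\ P\ne Q\}$. Curves are of class $C^2$ with nonvanishing first and second derivative vectors, oriented so that the curvature $\kappa$ is positive; a convex arc is such a non-closed curve on the boundary of a convex planar region. $\rho=1/\kappa$, $s$ is arclength, and $\mathrm{dist}(Q,\mathcal C)$ is the Euclidean distance from $Q$ to $\mathcal C$. *)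

theory Defs
  imports "HOL-Analysis.Analysis"
begin

definition cross2 :: "real^2 \<Rightarrow> real^2 \<Rightarrow> real" where
  "cross2 u v = u$1 * v$2 - u$2 * v$1"

definition lattice :: "real^2 \<Rightarrow> real^2 \<Rightarrow> real^2 \<Rightarrow> (real^2) set" where
  "lattice v0 v1 v2 = {v0 + of_int m *\<^sub>R v1 + of_int n *\<^sub>R v2 | m n. True}"

definition lattice_area :: "real^2 \<Rightarrow> real^2 \<Rightarrow> real" where
  "lattice_area v1 v2 = \<bar>cross2 v1 v2\<bar>"

definition lattice_mindist :: "(real^2) set \<Rightarrow> real" where
  "lattice_mindist L = Inf {dist P Q | P Q. P \<in> L \<and> Q \<in> L \<and> P \<noteq> Q}"

(* signed curvature of a parametrized plane curve with velocity g1 t and acceleration g2 t *)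
definition curvature :: "(real \<Rightarrow> real^2) \<Rightarrow> (real \<Rightarrow> real^2) \<Rightarrow> real \<Rightarrow> real" where
  "curvature g1 g2 t = cross2 (g1 t) (g2 t) / norm (g1 t) ^ 3"

end

(*
  For lattice points Q1, Q2, Q3 the quantity |cross2 (Q2 - Q1) (Q3 - Q1)| is an integer multiple
  of A_L, so three such points are either collinear or span a doubled area of at least A_L.

  If the points are within delta of the arc at parameters t1 <= t2 <= t3 with arclength gaps A and
  B, the doubled area is below L^3/(8 R1) + 2 L delta + 3 delta^2: the tangent turns at rate at most
  1/R1 per unit length, so the arc points span a doubled area of at most A B (A + B) / (2 R1), and
  moving each vertex by less than delta adds the remaining terms.

  In the collinear case the middle point has neighbours at distance at least d_L on either side
  along the line. As the radius of curvature is at most R2 and the tangent turns by at most pi, the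
  arc lies in the disk of radius R2 tangent to it at any of its points (its support function is
  dominated by that of the circle). At the arc point near the middle lattice point, one neighbour
  lies on the side away from the centre of this disk. A chord towards the arc near that neighbour
  would be longer than d_L - 2 delta while deviating from the line by less than 2 delta, which the
  disk excludes as soon as 4 R2 delta < (d_L - 2 delta)^2; this is what the bound on delta says.
*)
theory Submission
  imports Defs
begin

definition rot90 :: "real^2 \<Rightarrow> real^2" where
  "rot90 v = (\<chi> i. if i = 1 then - v$2 else v$1)"

definition dir :: "real \<Rightarrow> real^2" where
  "dir \<theta> = (\<chi> i. if i = 1 then cos \<theta> else sin \<theta>)"

lemma rot90_nth [simp]: "rot90 v $ 1 = - v$2" "rot90 v $ 2 = v$1"
  by (simp_all add: rot90_def)

lemma dir_nth [simp]: "dir \<theta> $ 1 = cos \<theta>" "dir \<theta> $ 2 = sin \<theta>"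
  by (simp_all add: dir_def)

lemma vec2_eq_iff: "(u::real^2) = v \<longleftrightarrow> u$1 = v$1 \<and> u$2 = v$2"
  by (auto simp: vec_eq_iff forall_2)

lemma inner_vec2: "inner (u::real^2) v = u$1 * v$1 + u$2 * v$2"
  by (simp add: inner_vec_def sum_2)

lemma norm_vec2_sq: "(norm (u::real^2))\<^sup>2 = (u$1)\<^sup>2 + (u$2)\<^sup>2"
  unfolding power2_norm_eq_inner inner_vec2 by (simp add: power2_eq_square)

lemma inner_rot90_left: "inner (rot90 u) v = cross2 u v"
  by (simp add: inner_vec2 cross2_def)

lemma inner_rot90_skew: "inner u (rot90 v) = - inner (rot90 u) v"
  by (simp add: inner_vec2 algebra_simps)

lemma norm_rot90 [simp]: "norm (rot90 v) = norm v"
  unfolding norm_eq_sqrt_inner inner_vec2 by (simp add: algebra_simps)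

lemma norm_dir [simp]: "norm (dir \<theta>) = 1"
  unfolding norm_eq_sqrt_inner inner_vec2 by (simp flip: power2_eq_square)

lemma cross2_self [simp]: "cross2 u u = 0"
  and cross2_zero [simp]: "cross2 0 u = 0" "cross2 u 0 = 0"
  by (simp_all add: cross2_def)

lemma cross2_commute: "cross2 u v = - cross2 v u"
  by (simp add: cross2_def)

lemma cross2_diff_right: "cross2 u (v - w) = cross2 u v - cross2 u w"
  by (simp add: cross2_def algebra_simps)

lemma cross2_scaleR_left: "cross2 (c *\<^sub>R v) u = c * cross2 v u"
  and cross2_scaleR_right: "cross2 u (c *\<^sub>R v) = c * cross2 u v"
  by (simp_all add: cross2_def algebra_simps)

lemma cross2_sq_add_inner_sq: "(cross2 u v)\<^sup>2 + (inner u v)\<^sup>2 = (norm u)\<^sup>2 * (norm v)\<^sup>2"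
  unfolding norm_vec2_sq by (simp add: cross2_def inner_vec2 power2_eq_square algebra_simps)

lemma abs_cross2_le: "\<bar>cross2 u v\<bar> \<le> norm u * norm v"
proof -
  have "(cross2 u v)\<^sup>2 \<le> (norm u)\<^sup>2 * (norm v)\<^sup>2"
    using cross2_sq_add_inner_sq[of u v] zero_le_power2[of "inner u v"] by linarith
  then have "\<bar>cross2 u v\<bar>\<^sup>2 \<le> (norm u * norm v)\<^sup>2"
    by (simp add: power_mult_distrib)
  then show ?thesis by (rule power2_le_imp_le) simp
qed

lemma inner_sq_add_inner_rot90_sq:
  "norm e = 1 \<Longrightarrow> (inner u e)\<^sup>2 + (inner u (rot90 e))\<^sup>2 = (norm u)\<^sup>2"
  using cross2_sq_add_inner_sq[of e u] by (simp add: inner_commute[of u] inner_rot90_left)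

lemma orthonormal_expansion:
  "norm e = 1 \<Longrightarrow> v = inner v e *\<^sub>R e + inner v (rot90 e) *\<^sub>R rot90 e"
  using norm_vec2_sq[of e] by (simp add: vec2_eq_iff inner_vec2 power2_eq_square) algebra

lemma unit_eq_if_inner_eq_1:
  fixes x y :: "real^2"
  assumes "norm x = 1" "norm y = 1" "inner x y = 1"
  shows "x = y"
proof -
  have "inner x x = 1" "inner y y = 1"
    using assms by (simp_all flip: power2_norm_eq_inner)
  then have "(norm (x - y))\<^sup>2 = 0"
    using assms unfolding power2_norm_eq_inner
    by (simp add: inner_diff_left inner_diff_right inner_commute)
  then show ?thesis by simp
qed

lemma dir_eq_rotate: "dir \<theta> = cos (\<theta> - \<phi>) *\<^sub>R dir \<phi> + sin (\<theta> - \<phi>) *\<^sub>R rot90 (dir \<phi>)"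
  using cos_add[of "\<theta> - \<phi>" \<phi>] sin_add[of "\<theta> - \<phi>" \<phi>] by (simp add: vec2_eq_iff algebra_simps)

lemma has_vector_derivative_dir:
  assumes "(f has_real_derivative f') (at x within S)"
  shows "((\<lambda>x. dir (f x)) has_vector_derivative f' *\<^sub>R rot90 (dir (f x))) (at x within S)"
proof -
  have dir_axis: "dir \<theta> = cos \<theta> *\<^sub>R axis 1 1 + sin \<theta> *\<^sub>R axis 2 1" for \<theta>
    by (simp add: vec2_eq_iff axis_def)
  have "((\<lambda>x. cos (f x) *\<^sub>R axis 1 (1::real) + sin (f x) *\<^sub>R axis (2::2) 1) has_vector_derivative
      (cos (f x) *\<^sub>R 0 + (- sin (f x) * f') *\<^sub>R axis 1 1 + (sin (f x) *\<^sub>R 0 + (cos (f x) * f') *\<^sub>R axis 2 1)))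
      (at x within S)"
    by (intro has_vector_derivative_add has_vector_derivative_scaleR has_vector_derivative_const
          DERIV_cos[THEN DERIV_chain2] DERIV_sin[THEN DERIV_chain2] assms)
  moreover have "cos (f x) *\<^sub>R 0 + (- sin (f x) * f') *\<^sub>R axis 1 1 + (sin (f x) *\<^sub>R 0 + (cos (f x) * f') *\<^sub>R axis 2 1)
      = f' *\<^sub>R rot90 (dir (f x))"
    by (simp add: vec2_eq_iff axis_def)
  ultimately show ?thesis
    by (simp add: dir_axis)
qed

lemma has_real_derivative_cross2_right:
  assumes "(f has_vector_derivative f') (at x within S)"
  shows "((\<lambda>x. cross2 c (f x)) has_real_derivative cross2 c f') (at x within S)"
  using bounded_bilinear.has_vector_derivative[OF bounded_bilinear_inner has_vector_derivative_const assms, of "rot90 c"]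
  by (simp add: inner_rot90_left has_real_derivative_iff_has_vector_derivative)

lemma has_real_derivative_cross2_left:
  assumes "(f has_vector_derivative f') (at x within S)"
  shows "((\<lambda>x. cross2 (f x) c) has_real_derivative cross2 f' c) (at x within S)"
  using DERIV_minus[OF has_real_derivative_cross2_right[OF assms, of c]]
  by (simp add: cross2_commute[of c])

lemma abs_cross2_swap12: "\<bar>cross2 (Q1 - Q2) (Q3 - Q2)\<bar> = \<bar>cross2 (Q2 - Q1) (Q3 - Q1)\<bar>"
  and abs_cross2_swap23: "\<bar>cross2 (Q3 - Q1) (Q2 - Q1)\<bar> = \<bar>cross2 (Q2 - Q1) (Q3 - Q1)\<bar>"
  by (simp_all add: cross2_def abs_minus_commute algebra_simps)

lemma abs_cross2_perturb_less:
  fixes X1 X2 X3 Q1 Q2 Q3 :: "real^2"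
  assumes "norm (Q1 - X1) < \<delta>" "norm (Q2 - X2) < \<delta>" "norm (Q3 - X3) < \<delta>"
  shows "\<bar>cross2 (Q2 - Q1) (Q3 - Q1)\<bar> < \<bar>cross2 (X2 - X1) (X3 - X1)\<bar>
          + \<delta> * (norm (X2 - X3) + norm (X3 - X1) + norm (X1 - X2)) + 3 * \<delta>\<^sup>2"
proof -
  define e1 e2 e3 where "e1 = Q1 - X1" and "e2 = Q2 - X2" and "e3 = Q3 - X3"
  have e: "norm e1 < \<delta>" "norm e2 < \<delta>" "norm e3 < \<delta>"
    using assms by (simp_all add: e1_def e2_def e3_def)
  have linear: "\<bar>cross2 e D\<bar> \<le> \<delta> * norm D" if "norm e < \<delta>" for e D
    using abs_cross2_le[of e D] mult_right_mono[of "norm e" \<delta> "norm D"] that by simp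
  have quadratic: "\<bar>cross2 e e'\<bar> < \<delta>\<^sup>2" if "norm e < \<delta>" "norm e' < \<delta>" for e e'
    using abs_cross2_le[of e e'] mult_strict_mono'[OF that] by (simp add: power2_eq_square)
  have "cross2 (Q2 - Q1) (Q3 - Q1) = cross2 (X2 - X1) (X3 - X1)
      + cross2 e1 (X2 - X3) + cross2 e2 (X3 - X1) + cross2 e3 (X1 - X2)
      + cross2 e1 e2 + cross2 e2 e3 + cross2 e3 e1"
    by (simp add: e1_def e2_def e3_def cross2_def algebra_simps)
  then show ?thesis
    using linear[OF e(1), of "X2 - X3"] linear[OF e(2), of "X3 - X1"] linear[OF e(3), of "X1 - X2"]
      quadratic[OF e(1,2)] quadratic[OF e(2,3)] quadratic[OF e(3,1)]
    by (simp add: distrib_left abs_le_iff abs_less_iff) linarith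
qed

lemma norm_eq_abs_inner_if_cross2_eq_0:
  assumes "norm e = 1" "cross2 e v = 0"
  shows "norm v = \<bar>inner e v\<bar>"
proof -
  have "(norm v)\<^sup>2 = (inner e v)\<^sup>2"
    using inner_sq_add_inner_rot90_sq[OF assms(1), of v] assms(2)
    by (simp add: inner_commute[of v] inner_rot90_left)
  then show ?thesis
    by (metis abs_of_nonneg norm_ge_zero power2_abs power2_eq_iff_nonneg abs_ge_zero)
qed

lemma dist_eq_inner_diff_if_on_line:
  assumes "norm e = 1" "cross2 e (P - P0) = 0" "cross2 e (Q - P0) = 0" "inner e P \<le> inner e Q"
  shows "dist P Q = inner e (Q - P)"
proof -
  have "cross2 e (Q - P) = 0"
    using assms(2,3) cross2_diff_right[of e "Q - P0" "P - P0"] by simp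
  then have "norm (Q - P) = \<bar>inner e (Q - P)\<bar>"
    by (rule norm_eq_abs_inner_if_cross2_eq_0[OF assms(1)])
  then show ?thesis
    using assms(4) by (simp add: dist_norm norm_minus_commute inner_diff_right)
qed

text \<open>The left-hand side is the derivative of \<open>x /\<^sub>R n\<close> for \<open>x' = y\<close> and \<open>n = norm x\<close>,
  as produced by the product and inverse rules.\<close>
lemma normalize_derivative_eq:
  fixes x y :: "real^2" and n :: real
  assumes n: "0 < n" "n\<^sup>2 = (norm x)\<^sup>2"
  shows "inverse n *\<^sub>R y + (- (inverse n * (inner y x / n) * inverse n)) *\<^sub>R x
       = (cross2 x y / n\<^sup>2) *\<^sub>R rot90 (inverse n *\<^sub>R x)"
proof -
  have n2: "n\<^sup>2 = (x$1)\<^sup>2 + (x$2)\<^sup>2"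
    using n norm_vec2_sq by simp
  have "y$1 * n\<^sup>2 - (y$1 * x$1 + y$2 * x$2) * x$1 = - (x$1 * y$2 - x$2 * y$1) * x$2"
    "y$2 * n\<^sup>2 - (y$1 * x$1 + y$2 * x$2) * x$2 = (x$1 * y$2 - x$2 * y$1) * x$1"
    unfolding n2 by (simp_all add: algebra_simps power2_eq_square)
  moreover have
    "(inverse n *\<^sub>R y + (- (inverse n * (inner y x / n) * inverse n)) *\<^sub>R x) $ 1
       = (y$1 * n\<^sup>2 - (y$1 * x$1 + y$2 * x$2) * x$1) / n ^ 3"
    "(inverse n *\<^sub>R y + (- (inverse n * (inner y x / n) * inverse n)) *\<^sub>R x) $ 2
       = (y$2 * n\<^sup>2 - (y$1 * x$1 + y$2 * x$2) * x$2) / n ^ 3"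
    "((cross2 x y / n\<^sup>2) *\<^sub>R rot90 (inverse n *\<^sub>R x)) $ 1 = (- (x$1 * y$2 - x$2 * y$1) * x$2) / n ^ 3"
    "((cross2 x y / n\<^sup>2) *\<^sub>R rot90 (inverse n *\<^sub>R x)) $ 2 = ((x$1 * y$2 - x$2 * y$1) * x$1) / n ^ 3"
    using n(1) by (simp_all add: inner_vec2 cross2_def field_simps power2_eq_square power3_eq_cube)
  ultimately show ?thesis
    unfolding vec2_eq_iff by simp
qed

lemma increment_le_of_deriv_le:
  fixes f g :: "real \<Rightarrow> real"
  assumes "p \<le> q" "{p..q} \<subseteq> S"
    and "\<And>x. x \<in> {p..q} \<Longrightarrow> (f has_real_derivative f' x) (at x within S)"
    and "\<And>x. x \<in> {p..q} \<Longrightarrow> (g has_real_derivative g' x) (at x within S)"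
    and "\<And>x. x \<in> {p..q} \<Longrightarrow> f' x \<le> g' x"
  shows "f q - f p \<le> g q - g p"
proof -
  have "(f' has_integral (f q - f p)) {p..q}" "(g' has_integral (g q - g p)) {p..q}"
    using assms(1-4) has_field_derivative_subset[of _ _ _ S "{p..q}"]
    by (auto intro!: fundamental_theorem_of_calculus simp flip: has_real_derivative_iff_has_vector_derivative)
  then show ?thesis
    using has_integral_le assms(5) by blast
qed

lemma mono_of_deriv_nonneg:
  fixes f :: "real \<Rightarrow> real"
  assumes "p \<le> q" "{p..q} \<subseteq> S"
    and "\<And>x. x \<in> {p..q} \<Longrightarrow> (f has_real_derivative f' x) (at x within S)"
    and "\<And>x. x \<in> {p..q} \<Longrightarrow> 0 \<le> f' x"
  shows "f p \<le> f q"
  using increment_le_of_deriv_le[where f="\<lambda>_. 0" and f'="\<lambda>_. 0" and g=f, OF assms(1,2) _ assms(3,4)]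
  by simp

lemma norm_increment_le_of_deriv_bound:
  fixes f :: "real \<Rightarrow> 'a::banach" and g :: "real \<Rightarrow> real"
  assumes "p \<le> q" "{p..q} \<subseteq> S"
    and "\<And>x. x \<in> {p..q} \<Longrightarrow> (f has_vector_derivative f' x) (at x within S)"
    and "\<And>x. x \<in> {p..q} \<Longrightarrow> (g has_real_derivative g' x) (at x within S)"
    and "\<And>x. x \<in> {p..q} \<Longrightarrow> norm (f' x) \<le> g' x"
  shows "norm (f q - f p) \<le> g q - g p"
proof -
  have f': "(f' has_integral (f q - f p)) {p..q}" and g': "(g' has_integral (g q - g p)) {p..q}"
    using assms(1-4) has_field_derivative_subset[of g _ _ S "{p..q}"]
      has_vector_derivative_within_subset[of f _ _ S "{p..q}"]
    by (auto intro!: fundamental_theorem_of_calculus simp flip: has_real_derivative_iff_has_vector_derivative)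
  have "norm (integral {p..q} f') \<le> integral {p..q} g'"
    using f' g' assms(5) by (intro integral_norm_bound_integral) auto
  then show ?thesis
    using f' g' by (simp add: integral_unique)
qed

lemma wlog_sorted3:
  fixes key :: "'a \<Rightarrow> 'b::linorder"
  assumes sorted: "\<And>x y z. key x \<le> key y \<Longrightarrow> key y \<le> key z \<Longrightarrow> P x y z"
    and swap12: "\<And>x y z. P y x z \<Longrightarrow> P x y z"
    and swap23: "\<And>x y z. P x z y \<Longrightarrow> P x y z"
  shows "P x y z"
proof -
  have P_if_le: "P x y z" if "key x \<le> key y" for x y z
  proof -
    consider "key y \<le> key z" | "key z \<le> key x" | "key x \<le> key z" "key z \<le> key y"
      using le_cases by blast
    then show ?thesis
    proof cases
      case 1
      show ?thesis by (rule sorted[OF that 1])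
    next
      case 2
      show ?thesis by (rule swap23, rule swap12, rule sorted[OF 2 that])
    next
      case 3
      show ?thesis by (rule swap23, rule sorted[OF 3])
    qed
  qed
  show ?thesis
  proof (cases "key x \<le> key y")
    case False
    then have "P y x z" by (intro P_if_le) simp
    then show ?thesis by (rule swap12)
  qed (rule P_if_le)
qed

lemma finite_card_le_2_if_no_three:
  assumes "\<And>x y z. x \<in> S \<Longrightarrow> y \<in> S \<Longrightarrow> z \<in> S \<Longrightarrow> x \<noteq> y \<Longrightarrow> y \<noteq> z \<Longrightarrow> x \<noteq> z \<Longrightarrow> False"
  shows "finite S \<and> card S \<le> 2"
proof (rule finite_if_finite_subsets_card_bdd)
  fix G assume "G \<subseteq> S" "finite G"
  show "card G \<le> 2"
  proof (rule ccontr)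
    assume "\<not> card G \<le> 2"
    then obtain B where "B \<subseteq> G" "card B = 3"
      by (metis obtain_subset_with_card_n not_less_eq_eq numeral_3_eq_3 numeral_2_eq_2)
    then obtain x y z where "x \<in> S" "y \<in> S" "z \<in> S" "x \<noteq> y" "y \<noteq> z" "x \<noteq> z"
      using \<open>G \<subseteq> S\<close> by (auto simp: card_3_iff) blast
    then show False by (rule assms)
  qed
qed

lemma lattice_mindist_le_dist:
  "P \<in> L \<Longrightarrow> Q \<in> L \<Longrightarrow> P \<noteq> Q \<Longrightarrow> lattice_mindist L \<le> dist P Q"
  unfolding lattice_mindist_def by (rule cInf_lower) (auto intro: bdd_belowI[of _ 0])

lemma lattice_mindist_nonneg:
  assumes "cross2 v1 v2 \<noteq> 0"
  shows "0 \<le> lattice_mindist (lattice v0 v1 v2)"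
proof -
  have "v0 + of_int m *\<^sub>R v1 + of_int n *\<^sub>R v2 \<in> lattice v0 v1 v2" for m n
    unfolding lattice_def by blast
  from this[of 0 0] this[of 1 0] have "v0 \<in> lattice v0 v1 v2" "v0 + v1 \<in> lattice v0 v1 v2"
    by simp_all
  moreover have "v1 \<noteq> 0"
    using assms by (auto simp: cross2_def)
  ultimately show ?thesis
    unfolding lattice_mindist_def by (intro cInf_greatest) force+
qed

lemma lattice_area_le_abs_cross2:
  assumes "P1 \<in> lattice v0 v1 v2" "P2 \<in> lattice v0 v1 v2" "P3 \<in> lattice v0 v1 v2"
    and "cross2 (P2 - P1) (P3 - P1) \<noteq> 0"
  shows "lattice_area v1 v2 \<le> \<bar>cross2 (P2 - P1) (P3 - P1)\<bar>"
proof -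
  obtain m1 n1 m2 n2 m3 n3 where
    "P1 = v0 + of_int m1 *\<^sub>R v1 + of_int n1 *\<^sub>R v2"
    "P2 = v0 + of_int m2 *\<^sub>R v1 + of_int n2 *\<^sub>R v2"
    "P3 = v0 + of_int m3 *\<^sub>R v1 + of_int n3 *\<^sub>R v2"
    using assms(1-3) unfolding lattice_def by blast
  then have "cross2 (P2 - P1) (P3 - P1)
      = of_int ((m2 - m1) * (n3 - n1) - (n2 - n1) * (m3 - m1)) * cross2 v1 v2"
    by (simp add: cross2_def algebra_simps)
  then obtain k :: int where k: "cross2 (P2 - P1) (P3 - P1) = of_int k * cross2 v1 v2"
    by blast
  with assms(4) have "1 \<le> \<bar>of_int k :: real\<bar>"
    by (metis mult_eq_0_iff of_int_0 of_int_1_le_iff of_int_abs zero_less_abs_iff int_one_le_iff_zero_less)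
  then show ?thesis
    unfolding k lattice_area_def abs_mult
    using mult_right_mono[OF _ abs_ge_zero[of "cross2 v1 v2"]] by fastforce
qed

text \<open>The bound on \<open>\<delta>\<close> is the smaller root of
  \<open>4\<delta>\<^sup>2 - 4(R + d)\<delta> + d\<^sup>2 = (d - 2\<delta>)\<^sup>2 - 4R\<delta>\<close>.\<close>
lemma small_delta_bounds:
  fixes R d \<delta> :: real
  assumes "0 < R" "0 \<le> d"
    and \<delta>: "\<delta> < d\<^sup>2 / (2 * (R + d + sqrt ((R + d)\<^sup>2 - d\<^sup>2)))"
  shows "2 * \<delta> < d" "4 * R * \<delta> < (d - 2 * \<delta>)\<^sup>2"
proof -
  define K where "K = R + d"
  define S where "S = sqrt (K\<^sup>2 - d\<^sup>2)"
  have "K\<^sup>2 - d\<^sup>2 = R\<^sup>2 + 2 * R * d"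
    by (simp add: K_def power2_eq_square algebra_simps)
  then have S: "0 \<le> S" "S\<^sup>2 = K\<^sup>2 - d\<^sup>2" "R \<le> S"
    using assms(1,2) by (auto simp: S_def intro!: real_le_rsqrt)
  have "0 < K" using assms(1,2) by (simp add: K_def)
  then have "d\<^sup>2 / (2 * (K + S)) = (K - S) / 2"
    using S by (simp add: field_simps power2_eq_square)
  then have \<delta>_less: "\<delta> < (K - S) / 2"
    using \<delta> unfolding K_def S_def by linarith
  then show "2 * \<delta> < d"
    using S by (simp add: K_def)
  have "0 < ((K - S) / 2 - \<delta>) * ((K + S) / 2 - \<delta>)"
    using \<delta>_less S(1) by (intro mult_pos_pos) auto
  also have "\<dots> = ((d - 2 * \<delta>)\<^sup>2 - 4 * R * \<delta>) / 4"
    using S(2) by (simp add: K_def power2_eq_square field_simps)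
  finally show "4 * R * \<delta> < (d - 2 * \<delta>)\<^sup>2"
    by simp
qed

lemma infdist_less_imp_dist_less: "A \<noteq> {} \<Longrightarrow> infdist x A < e \<Longrightarrow> \<exists>y\<in>A. dist x y < e"
  using cInf_lessD[of "(\<lambda>y. dist x y) ` A"] by (auto simp: infdist_notempty)

lemma sincos_total_minus_pi_half:
  assumes "x\<^sup>2 + y\<^sup>2 = 1"
  obtains c where "-(pi/2) \<le> c" "c \<le> 3/2*pi" "cos c = x" "sin c = y"
proof -
  obtain c0 where c0: "0 \<le> c0" "c0 < 2*pi" "cos c0 = x" "sin c0 = y"
    using sincos_total_2pi[OF assms] by metis
  show ?thesis
  proof (cases "c0 \<le> 3/2*pi")
    case False
    then show ?thesis
      using that[of "c0 - 2*pi"] c0 cos_periodic[of "c0 - 2*pi"] sin_periodic[of "c0 - 2*pi"] by simp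
  qed (use that[of c0] c0 in simp)
qed

lemma cos_nonpos_pi_half_3pi_half: "pi/2 \<le> x \<Longrightarrow> x \<le> 3/2*pi \<Longrightarrow> cos x \<le> 0"
  using cos_ge_zero[of "x - pi"] by simp

lemma cos_nonneg_3pi_half_5pi_half: "3/2*pi \<le> x \<Longrightarrow> x \<le> 5/2*pi \<Longrightarrow> 0 \<le> cos x"
  using cos_ge_zero[of "x - 2*pi"] cos_periodic[of "x - 2*pi"] by simp

text \<open>\<open>f\<close> is the projection of a plane curve onto a fixed direction, \<open>y\<close> the angle of its
  tangent against that direction, \<open>\<nu>\<close> its speed and \<open>\<omega>\<close> its angular speed; thus \<open>\<nu> \<le> R \<omega>\<close>
  bounds the radius of curvature by \<open>R\<close>.\<close>
locale turning_projection =
  fixes f y \<nu> \<omega> :: "real \<Rightarrow> real" and R a b :: real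
  assumes has_deriv_f: "\<And>x. x \<in> {a..b} \<Longrightarrow> (f has_real_derivative \<nu> x * cos (y x)) (at x within {a..b})"
    and has_deriv_y: "\<And>x. x \<in> {a..b} \<Longrightarrow> (y has_real_derivative \<omega> x) (at x within {a..b})"
    and nu_nonneg: "\<And>x. x \<in> {a..b} \<Longrightarrow> 0 \<le> \<nu> x"
    and omega_nonneg: "\<And>x. x \<in> {a..b} \<Longrightarrow> 0 \<le> \<omega> x"
    and nu_le: "\<And>x. x \<in> {a..b} \<Longrightarrow> \<nu> x \<le> R * \<omega> x"
    and R_nonneg: "0 \<le> R"
begin

lemma y_mono: "a \<le> p \<Longrightarrow> p \<le> q \<Longrightarrow> q \<le> b \<Longrightarrow> y p \<le> y q"
  by (rule mono_of_deriv_nonneg[where f=y and f'=\<omega> and S="{a..b}"]) (use has_deriv_y omega_nonneg in auto)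

lemma y_between: "a \<le> p \<Longrightarrow> q \<le> b \<Longrightarrow> x \<in> {p..q} \<Longrightarrow> y p \<le> y x \<and> y x \<le> y q"
  using y_mono by auto

lemma y_continuous: "continuous_on {a..b} y"
  using has_deriv_y
  by (intro continuous_on_vector_derivative) (simp add: has_real_derivative_iff_has_vector_derivative)

lemma y_crossing:
  assumes "a \<le> p" "p \<le> q" "q \<le> b" "y p \<le> v" "v \<le> y q"
  obtains \<tau> where "p \<le> \<tau>" "\<tau> \<le> q" "y \<tau> = v"
  using IVT'[of y p v q] assms continuous_on_subset[OF y_continuous, of "{p..q}"] by auto

lemma increment_nonpos:
  assumes "a \<le> p" "p \<le> q" "q \<le> b" "\<And>\<theta>. \<theta> \<in> {y p..y q} \<Longrightarrow> cos \<theta> \<le> 0"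
  shows "f q \<le> f p"
proof -
  have "f q - f p \<le> 0 - 0"
    by (rule increment_le_of_deriv_le[where S="{a..b}" and f'="\<lambda>x. \<nu> x * cos (y x)" and g'="\<lambda>_. 0"])
      (use assms has_deriv_f nu_nonneg y_between in \<open>auto intro!: mult_nonneg_nonpos\<close>)
  then show ?thesis by simp
qed

lemma increment_le_sin:
  assumes "a \<le> p" "p \<le> q" "q \<le> b" "\<And>\<theta>. \<theta> \<in> {y p..y q} \<Longrightarrow> 0 \<le> cos \<theta>"
  shows "f q - f p \<le> R * sin (y q) - R * sin (y p)"
proof (rule increment_le_of_deriv_le[where S="{a..b}" and f'="\<lambda>x. \<nu> x * cos (y x)"
      and g'="\<lambda>x. R * (cos (y x) * \<omega> x)"])
  fix x assume x: "x \<in> {p..q}"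
  then have "x \<in> {a..b}" using assms by auto
  show "((\<lambda>x. R * sin (y x)) has_real_derivative R * (cos (y x) * \<omega> x)) (at x within {a..b})"
    by (intro DERIV_cmult DERIV_sin[THEN DERIV_chain2] has_deriv_y \<open>x \<in> {a..b}\<close>)
  show "\<nu> x * cos (y x) \<le> R * (cos (y x) * \<omega> x)"
  proof -
    have "y x \<in> {y p..y q}"
      using y_between[of p q x] assms x by auto
    then show ?thesis
      using mult_right_mono[OF nu_le[OF \<open>x \<in> {a..b}\<close>] assms(4)[of "y x"]] by (simp add: mult_ac)
  qed
qed (use assms has_deriv_f in auto)

lemma increment_le_forward_from_rising:
  assumes t: "a \<le> t0" "t0 \<le> t" "t \<le> b"
    and c: "-(pi/2) \<le> y t0" "y t0 \<le> pi/2" and turn: "y t \<le> y t0 + pi"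
  shows "f t - f t0 \<le> R * (1 - sin (y t0))"
proof (cases "y t \<le> pi/2")
  case True
  have "f t - f t0 \<le> R * sin (y t) - R * sin (y t0)"
    by (rule increment_le_sin) (use t c True in \<open>auto intro!: cos_ge_zero\<close>)
  then show ?thesis
    using mult_left_le[OF sin_le_one[of "y t"] R_nonneg] by (simp add: algebra_simps)
next
  case False
  obtain \<tau> where \<tau>: "t0 \<le> \<tau>" "\<tau> \<le> t" "y \<tau> = pi/2"
    using y_crossing[of t0 t "pi/2"] t c False by auto
  have "f \<tau> - f t0 \<le> R * sin (y \<tau>) - R * sin (y t0)"
    by (rule increment_le_sin) (use t \<tau> c in \<open>auto intro!: cos_ge_zero\<close>)
  moreover have "f t \<le> f \<tau>"
    by (rule increment_nonpos) (use t \<tau> c turn in \<open>auto intro!: cos_nonpos_pi_half_3pi_half\<close>)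
  ultimately show ?thesis
    using \<tau> by (simp add: algebra_simps)
qed

lemma increment_le_forward_from_falling:
  assumes t: "a \<le> t0" "t0 \<le> t" "t \<le> b"
    and c: "pi/2 \<le> y t0" "y t0 \<le> 3/2*pi" and turn: "y t \<le> y t0 + pi"
  shows "f t - f t0 \<le> R * (1 - sin (y t0))"
proof (cases "y t \<le> 3/2*pi")
  case True
  have "f t \<le> f t0"
    by (rule increment_nonpos) (use t c True in \<open>auto intro!: cos_nonpos_pi_half_3pi_half\<close>)
  then show ?thesis
    using mult_left_le[OF sin_le_one[of "y t0"] R_nonneg] by (simp add: algebra_simps)
next
  case False
  obtain \<tau> where \<tau>: "t0 \<le> \<tau>" "\<tau> \<le> t" "y \<tau> = 3/2*pi"
    using y_crossing[of t0 t "3/2*pi"] t c False by auto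
  have "f \<tau> \<le> f t0"
    by (rule increment_nonpos) (use t \<tau> c in \<open>auto intro!: cos_nonpos_pi_half_3pi_half\<close>)
  moreover have "f t - f \<tau> \<le> R * sin (y t) - R * sin (y \<tau>)"
    by (rule increment_le_sin) (use t \<tau> c turn in \<open>auto intro!: cos_nonneg_3pi_half_5pi_half\<close>)
  moreover have "sin (y t) \<le> - sin (y t0)"
    using sin_monotone_2pi_le[of "y t - 2*pi" "y t0 - pi"] sin_periodic[of "y t - 2*pi"] c False turn
    by simp
  then have "R * sin (y t) \<le> - (R * sin (y t0))"
    using mult_left_mono[OF _ R_nonneg] by fastforce
  moreover have "R * sin (y \<tau>) = - R"
    by (simp only: \<tau>(3) sin_3over2_pi mult_minus1_right)
  ultimately have "f t - f t0 \<le> R - R * sin (y t0)"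
    by linarith
  then show ?thesis
    by (simp add: right_diff_distrib)
qed

text \<open>Where \<open>cos y \<ge> 0\<close> the projection grows at most like \<open>R sin y\<close>, as on a circle of
  radius \<open>R\<close>, and elsewhere it decreases; a turn by at most \<open>pi\<close> changes the sign of \<open>cos y\<close>
  at most once.\<close>
lemma increment_le_forward:
  assumes "a \<le> t0" "t0 \<le> t" "t \<le> b"
    and "-(pi/2) \<le> y t0" "y t0 \<le> 3/2*pi" "y t \<le> y t0 + pi"
  shows "f t - f t0 \<le> R * (1 - sin (y t0))"
  using increment_le_forward_from_rising[OF assms(1-4)] increment_le_forward_from_falling[OF assms(1-3) _ assms(5)]
    assms(6) by (cases "y t0 \<le> pi/2") auto

lemma increment_le_backward:
  assumes t: "a \<le> t" "t \<le> t0" "t0 \<le> b"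
    and c: "-(pi/2) \<le> y t0" "y t0 \<le> 3/2*pi" and turn: "y t0 - pi \<le> y t"
  shows "f t - f t0 \<le> R * (1 - sin (y t0))"
proof -
  \<comment> \<open>Reversing time replaces the angle \<open>y\<close> by \<open>pi - y (- x)\<close>, as \<open>cos (pi - \<theta>) = - cos \<theta>\<close>.\<close>
  interpret reversed: turning_projection "\<lambda>x. f (- x)" "\<lambda>x. pi - y (- x)" "\<lambda>x. \<nu> (- x)" "\<lambda>x. \<omega> (- x)" R "- b" "- a"
  proof
    fix x :: real assume x: "x \<in> {- b..- a}"
    then have "- x \<in> {a..b}" by auto
    have "(f \<circ> uminus has_real_derivative \<nu> (- x) * cos (y (- x)) * - 1) (at x within {- b..- a})"
      using DERIV_image_chain[OF _ DERIV_minus[OF DERIV_ident], of f _ x "{- b..- a}"] has_deriv_f[OF \<open>- x \<in> {a..b}\<close>]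
      by simp
    then show "((\<lambda>x. f (- x)) has_real_derivative \<nu> (- x) * cos (pi - y (- x))) (at x within {- b..- a})"
      by (simp add: o_def)
    have "(y \<circ> uminus has_real_derivative \<omega> (- x) * - 1) (at x within {- b..- a})"
      using DERIV_image_chain[OF _ DERIV_minus[OF DERIV_ident], of y _ x "{- b..- a}"] has_deriv_y[OF \<open>- x \<in> {a..b}\<close>]
      by simp
    then show "((\<lambda>x. pi - y (- x)) has_real_derivative \<omega> (- x)) (at x within {- b..- a})"
      using DERIV_diff[OF DERIV_const] by (fastforce simp: o_def)
  qed (use nu_nonneg omega_nonneg nu_le R_nonneg in auto)
  show ?thesis
    using reversed.increment_le_forward[of "- t0" "- t"] t c turn by simp
qed

end

locale bounded_curvature_arc =
  fixes \<gamma> \<gamma>1 \<gamma>2 :: "real \<Rightarrow> real^2" and a b R1 R2 :: real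
  assumes a_le_b: "a \<le> b"
    and has_deriv_\<gamma>: "\<And>t. t \<in> {a..b} \<Longrightarrow> (\<gamma> has_vector_derivative \<gamma>1 t) (at t within {a..b})"
    and has_deriv_\<gamma>1: "\<And>t. t \<in> {a..b} \<Longrightarrow> (\<gamma>1 has_vector_derivative \<gamma>2 t) (at t within {a..b})"
    and continuous_\<gamma>2: "continuous_on {a..b} \<gamma>2"
    and \<gamma>1_nonzero: "\<And>t. t \<in> {a..b} \<Longrightarrow> \<gamma>1 t \<noteq> 0"
    and total_curvature: "integral {a..b} (\<lambda>t. curvature \<gamma>1 \<gamma>2 t * norm (\<gamma>1 t)) \<le> pi"
    and R1_pos: "0 < R1"
    and curvature_radius: "\<And>t. t \<in> {a..b} \<Longrightarrow> R1 \<le> 1 / curvature \<gamma>1 \<gamma>2 t \<and> 1 / curvature \<gamma>1 \<gamma>2 t \<le> R2"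
begin

definition speed :: "real \<Rightarrow> real" where
  "speed t = norm (\<gamma>1 t)"

definition tangent :: "real \<Rightarrow> real^2" where
  "tangent t = inverse (speed t) *\<^sub>R \<gamma>1 t"

definition angular_speed :: "real \<Rightarrow> real" where
  "angular_speed t = curvature \<gamma>1 \<gamma>2 t * speed t"

definition arclength :: "real \<Rightarrow> real" where
  "arclength t = integral {a..t} speed"

definition tangent_angle :: "real \<Rightarrow> real" where
  "tangent_angle t = integral {a..t} angular_speed + (SOME \<theta>. tangent a = dir \<theta>)"

lemma speed_pos: "t \<in> {a..b} \<Longrightarrow> 0 < speed t"
  using \<gamma>1_nonzero by (simp add: speed_def)

lemma curvature_bounds:
  assumes "t \<in> {a..b}"
  shows "0 < curvature \<gamma>1 \<gamma>2 t" "R1 * curvature \<gamma>1 \<gamma>2 t \<le> 1" "1 \<le> R2 * curvature \<gamma>1 \<gamma>2 t"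
proof -
  have "0 < 1 / curvature \<gamma>1 \<gamma>2 t"
    using curvature_radius[OF assms] R1_pos by linarith
  then show "0 < curvature \<gamma>1 \<gamma>2 t" by simp
  then show "R1 * curvature \<gamma>1 \<gamma>2 t \<le> 1" "1 \<le> R2 * curvature \<gamma>1 \<gamma>2 t"
    using curvature_radius[OF assms] by (simp_all add: field_simps)
qed

lemma R2_pos: "0 < R2"
proof (rule ccontr)
  assume "\<not> 0 < R2"
  then have "R2 * curvature \<gamma>1 \<gamma>2 a \<le> 0"
    using curvature_bounds(1)[of a] a_le_b by (simp add: mult_nonpos_nonneg)
  then show False
    using curvature_bounds(3)[of a] a_le_b by simp
qed

lemma angular_speed_pos: "t \<in> {a..b} \<Longrightarrow> 0 < angular_speed t"
  using curvature_bounds(1) speed_pos by (simp add: angular_speed_def)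

lemma angular_speed_le: "t \<in> {a..b} \<Longrightarrow> R1 * angular_speed t \<le> speed t"
  using mult_right_mono[OF curvature_bounds(2) less_imp_le[OF speed_pos]]
  by (simp add: angular_speed_def mult_ac)

lemma speed_le_angular_speed: "t \<in> {a..b} \<Longrightarrow> speed t \<le> R2 * angular_speed t"
  using mult_right_mono[OF curvature_bounds(3) less_imp_le[OF speed_pos]]
  by (simp add: angular_speed_def mult_ac)

lemma angular_speed_eq: "angular_speed t = cross2 (\<gamma>1 t) (\<gamma>2 t) / (speed t)\<^sup>2"
  by (cases "speed t = 0")
    (simp_all add: angular_speed_def curvature_def speed_def power2_eq_square power3_eq_cube)

lemma continuous_on_speed: "continuous_on {a..b} speed"
  unfolding speed_def using has_deriv_\<gamma>1
  by (intro continuous_intros continuous_on_vector_derivative)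

lemma continuous_on_angular_speed: "continuous_on {a..b} angular_speed"
  unfolding angular_speed_eq[abs_def] cross2_def
  using continuous_on_vector_derivative[OF has_deriv_\<gamma>1] speed_pos
  by (intro continuous_intros continuous_\<gamma>2 continuous_on_speed) force+

lemma has_deriv_arclength: "t \<in> {a..b} \<Longrightarrow> (arclength has_real_derivative speed t) (at t within {a..b})"
  unfolding arclength_def has_real_derivative_iff_has_vector_derivative
  by (rule integral_has_vector_derivative[OF continuous_on_speed])

lemma has_deriv_tangent_angle:
  "t \<in> {a..b} \<Longrightarrow> (tangent_angle has_real_derivative angular_speed t) (at t within {a..b})"
  unfolding tangent_angle_def[abs_def] has_real_derivative_iff_has_vector_derivative
    has_vector_derivative_add_const
  by (rule integral_has_vector_derivative[OF continuous_on_angular_speed])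

lemma has_deriv_speed:
  assumes "t \<in> {a..b}"
  shows "(speed has_real_derivative inner (\<gamma>2 t) (\<gamma>1 t) / speed t) (at t within {a..b})"
proof -
  have "((\<lambda>t. norm (\<gamma>1 t)) has_derivative (\<lambda>h. inner (h *\<^sub>R \<gamma>2 t) (sgn (\<gamma>1 t)))) (at t within {a..b})"
    using has_derivative_compose[OF has_deriv_\<gamma>1[OF assms, unfolded has_vector_derivative_def]
        has_derivative_norm[OF \<gamma>1_nonzero[OF assms]]] .
  moreover have "(\<lambda>h. inner (h *\<^sub>R \<gamma>2 t) (sgn (\<gamma>1 t))) = (*) (inner (\<gamma>2 t) (\<gamma>1 t) / speed t)"
    by (auto simp: fun_eq_iff sgn_div_norm speed_def divide_inverse mult_ac)
  ultimately show ?thesis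
    by (simp add: has_field_derivative_def speed_def[abs_def])
qed

lemma norm_tangent: "t \<in> {a..b} \<Longrightarrow> norm (tangent t) = 1"
  using speed_pos[of t] by (simp add: tangent_def speed_def)

lemma has_deriv_\<gamma>_tangent:
  "t \<in> {a..b} \<Longrightarrow> (\<gamma> has_vector_derivative speed t *\<^sub>R tangent t) (at t within {a..b})"
  using has_deriv_\<gamma> speed_pos[of t] by (simp add: tangent_def)

lemma has_deriv_tangent:
  assumes "t \<in> {a..b}"
  shows "(tangent has_vector_derivative angular_speed t *\<^sub>R rot90 (tangent t)) (at t within {a..b})"
proof -
  have "((\<lambda>t. inverse (speed t) *\<^sub>R \<gamma>1 t) has_vector_derivative
      inverse (speed t) *\<^sub>R \<gamma>2 t + (- (inverse (speed t) * (inner (\<gamma>2 t) (\<gamma>1 t) / speed t) * inverse (speed t))) *\<^sub>R \<gamma>1 t)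
      (at t within {a..b})"
    using speed_pos[OF assms]
    by (intro has_vector_derivative_scaleR DERIV_inverse' has_deriv_speed has_deriv_\<gamma>1 assms) auto
  moreover have "inverse (speed t) *\<^sub>R \<gamma>2 t + (- (inverse (speed t) * (inner (\<gamma>2 t) (\<gamma>1 t) / speed t) * inverse (speed t))) *\<^sub>R \<gamma>1 t
      = angular_speed t *\<^sub>R rot90 (tangent t)"
    unfolding angular_speed_eq tangent_def
    by (rule normalize_derivative_eq) (use speed_pos[OF assms] in \<open>auto simp: speed_def\<close>)
  ultimately show ?thesis
    by (simp add: tangent_def[abs_def])
qed

lemma tangent_eq_dir:
  assumes "t \<in> {a..b}"
  shows "tangent t = dir (tangent_angle t)"
proof -
  define E where "E x = inner (tangent x) (dir (tangent_angle x))" for x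
  have "(E has_real_derivative 0) (at x within {a..b})" if "x \<in> {a..b}" for x
  proof -
    have "(E has_vector_derivative
        inner (tangent x) (angular_speed x *\<^sub>R rot90 (dir (tangent_angle x)))
        + inner (angular_speed x *\<^sub>R rot90 (tangent x)) (dir (tangent_angle x))) (at x within {a..b})"
      unfolding E_def[abs_def]
      by (rule bounded_bilinear.has_vector_derivative[OF bounded_bilinear_inner has_deriv_tangent[OF that]
            has_vector_derivative_dir[OF has_deriv_tangent_angle[OF that]]])
    then show ?thesis
      by (simp add: has_real_derivative_iff_has_vector_derivative inner_rot90_skew)
  qed
  then obtain c where c: "\<And>x. x \<in> {a..b} \<Longrightarrow> E x = c"
    using has_field_derivative_zero_constant[of "{a..b}" E] by auto
  obtain \<theta> where "tangent a $ 1 = cos \<theta>" "tangent a $ 2 = sin \<theta>"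
    using norm_tangent[of a] a_le_b norm_vec2_sq[of "tangent a"] sincos_total_2pi[of "tangent a $ 1" "tangent a $ 2"]
    by auto
  then have "\<exists>\<theta>. tangent a = dir \<theta>"
    by (auto simp: vec2_eq_iff)
  then have "tangent a = dir (tangent_angle a)"
    unfolding tangent_angle_def using someI_ex by simp
  then have "E a = 1"
    using norm_tangent[of a] a_le_b by (simp add: E_def flip: power2_norm_eq_inner)
  then have "inner (tangent t) (dir (tangent_angle t)) = 1"
    using c[OF assms] c[of a] a_le_b by (simp add: E_def)
  then show ?thesis
    using norm_tangent[OF assms] by (intro unit_eq_if_inner_eq_1) auto
qed

lemma arclength_mono: "a \<le> u \<Longrightarrow> u \<le> v \<Longrightarrow> v \<le> b \<Longrightarrow> arclength u \<le> arclength v"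
  by (rule mono_of_deriv_nonneg[where f=arclength and f'=speed and S="{a..b}"])
    (use has_deriv_arclength speed_pos in \<open>auto intro: less_imp_le\<close>)

lemma arclength_diff_le: "a \<le> u \<Longrightarrow> u \<le> v \<Longrightarrow> v \<le> b \<Longrightarrow> arclength v - arclength u \<le> arclength b"
  using arclength_mono[of a u] arclength_mono[of v b] by (simp add: arclength_def)

lemma tangent_angle_diff_le_pi:
  assumes "a \<le> u" "u \<le> v" "v \<le> b"
  shows "tangent_angle v - tangent_angle u \<le> pi"
proof -
  have mono: "tangent_angle p \<le> tangent_angle q" if "a \<le> p" "p \<le> q" "q \<le> b" for p q
    by (rule mono_of_deriv_nonneg[where f=tangent_angle and f'=angular_speed and S="{a..b}"])
      (use that has_deriv_tangent_angle angular_speed_pos in \<open>auto intro: less_imp_le\<close>)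
  have "tangent_angle b - tangent_angle a \<le> pi"
    using total_curvature unfolding tangent_angle_def angular_speed_def[abs_def] speed_def by simp
  then show ?thesis
    using mono[of a u] mono[of v b] assms by linarith
qed

lemma norm_chord_le: "a \<le> u \<Longrightarrow> u \<le> v \<Longrightarrow> v \<le> b \<Longrightarrow> norm (\<gamma> v - \<gamma> u) \<le> arclength v - arclength u"
  by (rule norm_increment_le_of_deriv_bound[where S="{a..b}" and f'="\<lambda>t. speed t *\<^sub>R tangent t"])
    (use has_deriv_\<gamma>_tangent has_deriv_arclength speed_pos norm_tangent in \<open>auto simp: less_imp_le\<close>)

lemma norm_tangent_diff_le:
  assumes "a \<le> u" "u \<le> v" "v \<le> b"
  shows "norm (tangent v - tangent u) \<le> (arclength v - arclength u) / R1"
proof -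
  have "norm (tangent v - tangent u) \<le> arclength v / R1 - arclength u / R1"
  proof (rule norm_increment_le_of_deriv_bound[where S="{a..b}"
        and f'="\<lambda>t. angular_speed t *\<^sub>R rot90 (tangent t)" and g'="\<lambda>t. speed t / R1"])
    fix x assume "x \<in> {u..v}"
    then have x: "x \<in> {a..b}" using assms by auto
    show "((\<lambda>t. arclength t / R1) has_real_derivative speed x / R1) (at x within {a..b})"
      using has_deriv_arclength[OF x] by (rule DERIV_cdivide)
    show "norm (angular_speed x *\<^sub>R rot90 (tangent x)) \<le> speed x / R1"
      using norm_tangent[OF x] angular_speed_pos[OF x] angular_speed_le[OF x] R1_pos
      by (simp add: le_divide_eq mult.commute)
  qed (use assms has_deriv_tangent in auto)
  then show ?thesis
    by (simp add: diff_divide_distrib)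
qed

lemma abs_cross2_chord_tangent_le:
  assumes "a \<le> t1" "t1 \<le> t2" "t2 \<le> b"
  shows "\<bar>cross2 (\<gamma> t2 - \<gamma> t1) (tangent t2)\<bar> \<le> (arclength t2 - arclength t1)\<^sup>2 / (2 * R1)"
proof -
  define g where "g u = - ((arclength t2 - arclength u)\<^sup>2 / (2 * R1))" for u
  have "norm (cross2 (\<gamma> t2 - \<gamma> t2) (tangent t2) - cross2 (\<gamma> t2 - \<gamma> t1) (tangent t2)) \<le> g t2 - g t1"
  proof (rule norm_increment_le_of_deriv_bound[where S="{a..b}"
        and f'="\<lambda>u. - cross2 (speed u *\<^sub>R tangent u) (tangent t2)"
        and g'="\<lambda>u. (arclength t2 - arclength u) * speed u / R1"])
    fix x assume "x \<in> {t1..t2}"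
    then have x: "x \<in> {a..b}" using assms by auto
    have "((\<lambda>u. cross2 (\<gamma> t2 - \<gamma> u) (tangent t2)) has_real_derivative
        cross2 (0 - speed x *\<^sub>R tangent x) (tangent t2)) (at x within {a..b})"
      by (intro has_real_derivative_cross2_left has_vector_derivative_diff has_vector_derivative_const
          has_deriv_\<gamma>_tangent x)
    then show "((\<lambda>u. cross2 (\<gamma> t2 - \<gamma> u) (tangent t2)) has_vector_derivative
        - cross2 (speed x *\<^sub>R tangent x) (tangent t2)) (at x within {a..b})"
      by (simp add: has_real_derivative_iff_has_vector_derivative cross2_def)
    show "(g has_real_derivative (arclength t2 - arclength x) * speed x / R1) (at x within {a..b})"
      unfolding g_def[abs_def] using R1_pos
      by (auto intro!: derivative_eq_intros has_deriv_arclength[OF x] simp: field_simps power2_eq_square)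
    have "\<bar>cross2 (tangent x) (tangent t2)\<bar> = \<bar>cross2 (tangent x) (tangent t2 - tangent x)\<bar>"
      by (simp add: cross2_diff_right)
    also have "\<dots> \<le> norm (tangent t2 - tangent x)"
      using abs_cross2_le[of "tangent x" "tangent t2 - tangent x"] norm_tangent[OF x] by simp
    also have "\<dots> \<le> (arclength t2 - arclength x) / R1"
      using norm_tangent_diff_le[of x t2] \<open>x \<in> {t1..t2}\<close> assms by auto
    finally have "speed x * \<bar>cross2 (tangent x) (tangent t2)\<bar> \<le> speed x * ((arclength t2 - arclength x) / R1)"
      using speed_pos[OF x] by (intro mult_left_mono) auto
    then show "norm (- cross2 (speed x *\<^sub>R tangent x) (tangent t2))
        \<le> (arclength t2 - arclength x) * speed x / R1"
      using speed_pos[OF x] by (simp add: cross2_scaleR_left abs_mult mult.commute)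
  qed (use assms in auto)
  then show ?thesis
    by (simp add: g_def)
qed

lemma abs_cross2_chord_later_tangent_le:
  assumes "a \<le> t1" "t1 \<le> t2" "t2 \<le> x" "x \<le> b"
  defines "A \<equiv> arclength t2 - arclength t1"
  shows "\<bar>cross2 (\<gamma> t2 - \<gamma> t1) (tangent x)\<bar> \<le> (A * (arclength x - arclength t2) + A\<^sup>2 / 2) / R1"
proof -
  define V where "V = \<gamma> t2 - \<gamma> t1"
  have "\<bar>cross2 V (tangent x - tangent t2)\<bar> \<le> norm V * norm (tangent x - tangent t2)"
    by (rule abs_cross2_le)
  also have "\<dots> \<le> A * ((arclength x - arclength t2) / R1)"
    using norm_chord_le[of t1 t2] norm_tangent_diff_le[of t2 x] arclength_mono[of t1 t2] assms
    by (intro mult_mono) (auto simp: V_def)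
  finally have "\<bar>cross2 V (tangent x - tangent t2)\<bar> \<le> A * ((arclength x - arclength t2) / R1)" .
  moreover have "\<bar>cross2 V (tangent t2)\<bar> \<le> A\<^sup>2 / (2 * R1)"
    using abs_cross2_chord_tangent_le[of t1 t2] assms by (simp add: V_def)
  moreover have "cross2 V (tangent x) = cross2 V (tangent x - tangent t2) + cross2 V (tangent t2)"
    by (simp add: cross2_diff_right)
  ultimately have "\<bar>cross2 V (tangent x)\<bar> \<le> A * ((arclength x - arclength t2) / R1) + A\<^sup>2 / (2 * R1)"
    using abs_triangle_ineq[of "cross2 V (tangent x - tangent t2)" "cross2 V (tangent t2)"] by linarith
  also have "\<dots> = (A * (arclength x - arclength t2) + A\<^sup>2 / 2) / R1"
    using R1_pos by (simp add: field_simps)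
  finally show ?thesis
    by (simp add: V_def)
qed

lemma abs_cross2_chords_le:
  assumes "a \<le> t1" "t1 \<le> t2" "t2 \<le> t3" "t3 \<le> b"
  defines "A \<equiv> arclength t2 - arclength t1" and "B \<equiv> arclength t3 - arclength t2"
  shows "\<bar>cross2 (\<gamma> t2 - \<gamma> t1) (\<gamma> t3 - \<gamma> t2)\<bar> \<le> A * B * (A + B) / (2 * R1)"
proof -
  define V where "V = \<gamma> t2 - \<gamma> t1"
  define g where "g u = (A * (arclength u - arclength t2)\<^sup>2 / 2 + A\<^sup>2 * (arclength u - arclength t2) / 2) / R1" for u
  have "norm (cross2 V (\<gamma> t3 - \<gamma> t2) - cross2 V (\<gamma> t2 - \<gamma> t2)) \<le> g t3 - g t2"
  proof (rule norm_increment_le_of_deriv_bound[where S="{a..b}" and f'="\<lambda>u. cross2 V (speed u *\<^sub>R tangent u)"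
        and g'="\<lambda>u. speed u * (A * (arclength u - arclength t2) + A\<^sup>2 / 2) / R1"])
    fix x assume "x \<in> {t2..t3}"
    then have x: "x \<in> {a..b}" using assms by auto
    have "((\<lambda>u. cross2 V (\<gamma> u - \<gamma> t2)) has_real_derivative cross2 V (speed x *\<^sub>R tangent x - 0))
        (at x within {a..b})"
      by (intro has_real_derivative_cross2_right has_vector_derivative_diff has_vector_derivative_const
          has_deriv_\<gamma>_tangent x)
    then show "((\<lambda>u. cross2 V (\<gamma> u - \<gamma> t2)) has_vector_derivative cross2 V (speed x *\<^sub>R tangent x))
        (at x within {a..b})"
      by (simp add: has_real_derivative_iff_has_vector_derivative)
    show "(g has_real_derivative speed x * (A * (arclength x - arclength t2) + A\<^sup>2 / 2) / R1) (at x within {a..b})"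
      unfolding g_def[abs_def] using R1_pos
      by (auto intro!: derivative_eq_intros has_deriv_arclength[OF x] simp: field_simps power2_eq_square)
    have "speed x * \<bar>cross2 V (tangent x)\<bar> \<le> speed x * ((A * (arclength x - arclength t2) + A\<^sup>2 / 2) / R1)"
      using abs_cross2_chord_later_tangent_le[of t1 t2 x] \<open>x \<in> {t2..t3}\<close> assms speed_pos[OF x]
      by (intro mult_left_mono) (auto simp: V_def)
    then show "norm (cross2 V (speed x *\<^sub>R tangent x))
        \<le> speed x * (A * (arclength x - arclength t2) + A\<^sup>2 / 2) / R1"
      using speed_pos[OF x] by (simp add: cross2_scaleR_right abs_mult)
  qed (use assms in auto)
  moreover have "g t3 - g t2 = A * B * (A + B) / (2 * R1)"
    using R1_pos by (simp add: g_def A_def B_def field_simps power2_eq_square)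
  ultimately show ?thesis
    by (simp add: V_def)
qed

lemma abs_cross2_chords_le_cube:
  assumes "a \<le> t1" "t1 \<le> t2" "t2 \<le> t3" "t3 \<le> b"
  shows "\<bar>cross2 (\<gamma> t2 - \<gamma> t1) (\<gamma> t3 - \<gamma> t1)\<bar> \<le> arclength b ^ 3 / (8 * R1)"
proof -
  define A B where "A = arclength t2 - arclength t1" and "B = arclength t3 - arclength t2"
  have AB: "0 \<le> A" "0 \<le> B" "A + B \<le> arclength b"
    using arclength_mono[of t1 t2] arclength_mono[of t2 t3] arclength_diff_le[of t1 t3] assms
    by (simp_all add: A_def B_def)
  have "cross2 (\<gamma> t2 - \<gamma> t1) (\<gamma> t3 - \<gamma> t1) = cross2 (\<gamma> t2 - \<gamma> t1) (\<gamma> t3 - \<gamma> t2)"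
    by (simp add: cross2_def algebra_simps)
  then have "\<bar>cross2 (\<gamma> t2 - \<gamma> t1) (\<gamma> t3 - \<gamma> t1)\<bar> \<le> A * B * (A + B) / (2 * R1)"
    using abs_cross2_chords_le[OF assms] by (simp add: A_def B_def)
  also have "\<dots> = 4 * (A * B) * (A + B) / (8 * R1)"
    by simp
  also have "\<dots> \<le> (A + B)\<^sup>2 * (A + B) / (8 * R1)"
    using AB R1_pos sum_squares_ge_zero[of "A - B" 0]
    by (intro divide_right_mono mult_right_mono) (auto simp: power2_eq_square algebra_simps)
  also have "\<dots> = (A + B) ^ 3 / (8 * R1)"
    by (simp add: power2_eq_square power3_eq_cube)
  also have "\<dots> \<le> arclength b ^ 3 / (8 * R1)"
    using AB R1_pos by (intro divide_right_mono power_mono) auto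
  finally show ?thesis .
qed

lemma abs_cross2_near_sorted_less:
  assumes t: "a \<le> t1" "t1 \<le> t2" "t2 \<le> t3" "t3 \<le> b"
    and Q: "norm (Q1 - \<gamma> t1) < \<delta>" "norm (Q2 - \<gamma> t2) < \<delta>" "norm (Q3 - \<gamma> t3) < \<delta>"
  shows "\<bar>cross2 (Q2 - Q1) (Q3 - Q1)\<bar> < arclength b ^ 3 / (8 * R1) + 2 * arclength b * \<delta> + 3 * \<delta>\<^sup>2"
proof -
  have "norm (\<gamma> t2 - \<gamma> t3) + norm (\<gamma> t3 - \<gamma> t1) + norm (\<gamma> t1 - \<gamma> t2) \<le> 2 * arclength b"
    using norm_chord_le[of t2 t3] norm_chord_le[of t1 t3] norm_chord_le[of t1 t2] arclength_diff_le[of t1 t3] t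
    by (simp add: norm_minus_commute)
  then have "\<delta> * (norm (\<gamma> t2 - \<gamma> t3) + norm (\<gamma> t3 - \<gamma> t1) + norm (\<gamma> t1 - \<gamma> t2)) \<le> \<delta> * (2 * arclength b)"
    using Q(1) norm_ge_zero[of "Q1 - \<gamma> t1"] by (intro mult_left_mono) linarith+
  then show ?thesis
    using abs_cross2_perturb_less[OF Q] abs_cross2_chords_le_cube[OF t] by (simp add: algebra_simps)
qed

lemma abs_cross2_near_less:
  assumes "t1 \<in> {a..b}" "t2 \<in> {a..b}" "t3 \<in> {a..b}"
    and "norm (Q1 - \<gamma> t1) < \<delta>" "norm (Q2 - \<gamma> t2) < \<delta>" "norm (Q3 - \<gamma> t3) < \<delta>"
  shows "\<bar>cross2 (Q2 - Q1) (Q3 - Q1)\<bar> < arclength b ^ 3 / (8 * R1) + 2 * arclength b * \<delta> + 3 * \<delta>\<^sup>2"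
proof -
  define near where "near = (\<lambda>(t, Q). t \<in> {a..b} \<and> norm (Q - \<gamma> t) < \<delta>)"
  define P where "P = (\<lambda>(t1, Q1) (t2, Q2) (t3, Q3). near (t1, Q1) \<longrightarrow> near (t2, Q2) \<longrightarrow> near (t3, Q3) \<longrightarrow>
    \<bar>cross2 (Q2 - Q1) (Q3 - Q1)\<bar> < arclength b ^ 3 / (8 * R1) + 2 * arclength b * \<delta> + 3 * \<delta>\<^sup>2)"
  have "P (t1, Q1) (t2, Q2) (t3, Q3)"
  proof (rule wlog_sorted3[where key=fst])
    show "P x y z" if "fst x \<le> fst y" "fst y \<le> fst z" for x y z
      using that abs_cross2_near_sorted_less unfolding P_def near_def by (auto split: prod.splits)
    show "P x y z" if "P y x z" for x y z
      using that abs_cross2_swap12 unfolding P_def by (auto split: prod.splits)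
    show "P x y z" if "P x z y" for x y z
      using that abs_cross2_swap23 unfolding P_def by (auto split: prod.splits)
  qed
  then show ?thesis
    using assms unfolding P_def near_def by simp
qed

lemma inner_tangent_eq_cos:
  assumes "t0 \<in> {a..b}" "t \<in> {a..b}"
    and "cos c = inner u (tangent t0)" "sin c = - inner u (rot90 (tangent t0))"
  shows "inner u (tangent t) = cos (tangent_angle t - tangent_angle t0 + c)"
proof -
  have "tangent t = cos (tangent_angle t - tangent_angle t0) *\<^sub>R tangent t0
      + sin (tangent_angle t - tangent_angle t0) *\<^sub>R rot90 (tangent t0)"
    using tangent_eq_dir[OF assms(1)] tangent_eq_dir[OF assms(2)] dir_eq_rotate by simp
  then show ?thesis
    using assms(3,4) by (simp add: inner_add_right cos_add)
qed

lemma inner_chord_le: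
  assumes t0: "t0 \<in> {a..b}" and t: "t \<in> {a..b}" and u: "norm u = 1"
  shows "inner u (\<gamma> t - \<gamma> t0) \<le> R2 * (1 + inner u (rot90 (tangent t0)))"
proof -
  define p q where "p = inner u (tangent t0)" and "q = inner u (rot90 (tangent t0))"
  have "p\<^sup>2 + (- q)\<^sup>2 = 1"
    using inner_sq_add_inner_rot90_sq[OF norm_tangent[OF t0], of u] u by (simp add: p_def q_def)
  then obtain c where c: "-(pi/2) \<le> c" "c \<le> 3/2*pi" "cos c = p" "sin c = - q"
    by (rule sincos_total_minus_pi_half)
  interpret turning_projection "\<lambda>x. inner u (\<gamma> x)" "\<lambda>x. tangent_angle x - tangent_angle t0 + c"
    speed angular_speed R2 a b
  proof
    fix x assume x: "x \<in> {a..b}"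
    have "((\<lambda>x. inner u (\<gamma> x)) has_vector_derivative inner u (speed x *\<^sub>R tangent x) + inner 0 (\<gamma> x))
        (at x within {a..b})"
      by (rule bounded_bilinear.has_vector_derivative[OF bounded_bilinear_inner
            has_vector_derivative_const has_deriv_\<gamma>_tangent[OF x]])
    moreover have "inner u (tangent x) = cos (tangent_angle x - tangent_angle t0 + c)"
      using inner_tangent_eq_cos[OF t0 x] c by (simp add: p_def q_def)
    ultimately show "((\<lambda>x. inner u (\<gamma> x)) has_real_derivative
        speed x * cos (tangent_angle x - tangent_angle t0 + c)) (at x within {a..b})"
      by (simp add: has_real_derivative_iff_has_vector_derivative)
    show "((\<lambda>x. tangent_angle x - tangent_angle t0 + c) has_real_derivative angular_speed x)
        (at x within {a..b})"
      using has_deriv_tangent_angle[OF x] by (auto intro!: derivative_eq_intros)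
  qed (use speed_pos angular_speed_pos speed_le_angular_speed R2_pos in \<open>auto intro: less_imp_le\<close>)
  have "inner u (\<gamma> t) - inner u (\<gamma> t0) \<le> R2 * (1 - sin c)"
  proof (cases "t0 \<le> t")
    case True
    then show ?thesis
      using increment_le_forward[of t0 t] tangent_angle_diff_le_pi[of t0 t] t0 t c by simp
  next
    case False
    then show ?thesis
      using increment_le_backward[of t t0] tangent_angle_diff_le_pi[of t t0] t0 t c by simp
  qed
  then show ?thesis
    using c by (simp add: q_def inner_diff_right)
qed

lemma chord_in_tangent_disk:
  assumes t0: "t0 \<in> {a..b}" and t: "t \<in> {a..b}"
  shows "(norm (\<gamma> t - \<gamma> t0))\<^sup>2 \<le> 2 * R2 * cross2 (tangent t0) (\<gamma> t - \<gamma> t0)"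
proof -
  define V N where "V = \<gamma> t - \<gamma> t0" and "N = rot90 (tangent t0)"
  define Z where "Z = V - R2 *\<^sub>R N"
  have "inner N N = 1"
    using norm_tangent[OF t0] by (simp add: N_def flip: power2_norm_eq_inner)
  have "(norm Z)\<^sup>2 = inner V V - 2 * R2 * inner N V + R2\<^sup>2 * inner N N"
    unfolding power2_norm_eq_inner
    by (simp add: Z_def inner_diff_left inner_diff_right inner_commute algebra_simps power2_eq_square)
  then have Z: "(norm Z)\<^sup>2 = (norm V)\<^sup>2 - 2 * R2 * inner N V + R2\<^sup>2"
    using \<open>inner N N = 1\<close> by (simp add: power2_norm_eq_inner)
  have "norm Z \<le> R2"
  proof (cases "Z = 0")
    case False
    define u where "u = (1 / norm Z) *\<^sub>R Z"
    have "norm u = 1"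
      using False by (simp add: u_def)
    then have "inner u Z \<le> R2"
      using inner_chord_le[OF t0 t] by (simp add: Z_def V_def N_def inner_diff_right algebra_simps)
    moreover have "inner u Z = norm Z"
      using False by (simp add: u_def power2_eq_square flip: power2_norm_eq_inner)
    ultimately show ?thesis by simp
  qed (use R2_pos in simp)
  then have "(norm Z)\<^sup>2 \<le> R2\<^sup>2"
    by (intro power_mono) auto
  then show ?thesis
    using Z by (simp add: V_def N_def inner_rot90_left)
qed

lemma norm_chord_sq_le_normal_part:
  assumes "s \<in> {a..b}" "t \<in> {a..b}" "norm e = 1"
    and "inner (rot90 (tangent s)) e * inner e (\<gamma> t - \<gamma> s) \<le> 0"
  shows "(norm (\<gamma> t - \<gamma> s))\<^sup>2 \<le> 2 * R2 * \<bar>cross2 e (\<gamma> t - \<gamma> s)\<bar>"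
proof -
  define D N where "D = \<gamma> t - \<gamma> s" and "N = rot90 (tangent s)"
  have "norm N = 1"
    using norm_tangent[OF assms(1)] by (simp add: N_def)
  then have "\<bar>inner N (rot90 e)\<bar> \<le> 1"
    using Cauchy_Schwarz_ineq2[of N "rot90 e"] assms(3) by simp
  have "cross2 (tangent s) D = inner N D"
    by (simp add: N_def inner_rot90_left)
  also have "\<dots> = inner N e * inner e D + inner N (rot90 e) * cross2 e D"
    by (subst orthonormal_expansion[OF assms(3), of N])
      (simp add: inner_add_left inner_rot90_left)
  also have "\<dots> \<le> \<bar>inner N (rot90 e)\<bar> * \<bar>cross2 e D\<bar>"
    using assms(4) by (simp add: N_def D_def abs_mult[symmetric])
  also have "\<dots> \<le> \<bar>cross2 e D\<bar>"
    using \<open>\<bar>inner N (rot90 e)\<bar> \<le> 1\<close> by (simp add: mult_left_le_one_le)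
  finally have "2 * R2 * cross2 (tangent s) D \<le> 2 * R2 * \<bar>cross2 e D\<bar>"
    using R2_pos by (intro mult_left_mono) auto
  then show ?thesis
    using chord_in_tangent_disk[OF assms(1,2)] by (simp add: D_def)
qed

text \<open>The last hypothesis on \<open>P\<close> says that it lies on the side of \<open>PM\<close> not facing the
  centre of the tangent disk at \<open>\<gamma> tM\<close>.\<close>
lemma far_side_point_not_near:
  assumes "tM \<in> {a..b}" "t \<in> {a..b}" and e: "norm e = 1"
    and near: "norm (PM - \<gamma> tM) < \<delta>" "norm (P - \<gamma> t) < \<delta>"
    and P: "cross2 e (P - PM) = 0" "d \<le> \<bar>inner e (P - PM)\<bar>"
      "inner (rot90 (tangent tM)) e * inner e (P - PM) \<le> 0"
    and \<delta>: "2 * \<delta> < d" "4 * R2 * \<delta> < (d - 2 * \<delta>)\<^sup>2"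
  shows False
proof -
  define D \<epsilon> where "D = \<gamma> t - \<gamma> tM" and "\<epsilon> = (PM - \<gamma> tM) - (P - \<gamma> t)"
  have "norm \<epsilon> < 2 * \<delta>"
    using norm_triangle_ineq4[of "PM - \<gamma> tM" "P - \<gamma> t"] near by (simp add: \<epsilon>_def)
  then have \<epsilon>: "\<bar>inner e \<epsilon>\<bar> < 2 * \<delta>" "\<bar>cross2 e \<epsilon>\<bar> < 2 * \<delta>"
    using Cauchy_Schwarz_ineq2[of e \<epsilon>] abs_cross2_le[of e \<epsilon>] e by auto
  have D: "inner e D = inner e (P - PM) + inner e \<epsilon>" "cross2 e D = cross2 e \<epsilon>"
    using P(1) by (simp_all add: D_def \<epsilon>_def inner_diff_right cross2_def algebra_simps)
  have "d - 2 * \<delta> < \<bar>inner e D\<bar>" "inner (rot90 (tangent tM)) e * inner e D \<le> 0"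
    using D(1) \<epsilon>(1) P(2,3) \<delta>(1) by (auto simp: abs_if mult_le_0_iff split: if_splits)
  have "(d - 2 * \<delta>)\<^sup>2 < (norm D)\<^sup>2"
    using \<open>d - 2 * \<delta> < \<bar>inner e D\<bar>\<close> Cauchy_Schwarz_ineq2[of e D] e \<delta>(1)
    by (intro power_strict_mono) auto
  also have "\<dots> \<le> 2 * R2 * \<bar>cross2 e D\<bar>"
    using norm_chord_sq_le_normal_part[OF assms(1,2) e] \<open>inner (rot90 (tangent tM)) e * inner e D \<le> 0\<close>
    by (simp add: D_def)
  also have "\<dots> \<le> 4 * R2 * \<delta>"
    using D(2) \<epsilon>(2) R2_pos by simp
  finally show False
    using \<delta>(2) by simp
qed

lemma middle_of_collinear_points_not_near:
  assumes t: "tj \<in> {a..b}" "tM \<in> {a..b}" "tk \<in> {a..b}" and e: "norm e = 1"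
    and line: "cross2 e (Pj - P0) = 0" "cross2 e (PM - P0) = 0" "cross2 e (Pk - P0) = 0"
    and sorted: "inner e Pj \<le> inner e PM" "inner e PM \<le> inner e Pk"
    and spaced: "d \<le> dist Pj PM" "d \<le> dist PM Pk"
    and near: "norm (Pj - \<gamma> tj) < \<delta>" "norm (PM - \<gamma> tM) < \<delta>" "norm (Pk - \<gamma> tk) < \<delta>"
    and \<delta>: "2 * \<delta> < d" "4 * R2 * \<delta> < (d - 2 * \<delta>)\<^sup>2"
  shows False
proof -
  have "cross2 e (Pj - PM) = 0" "cross2 e (Pk - PM) = 0"
    using line cross2_diff_right[of e "Pj - P0" "PM - P0"] cross2_diff_right[of e "Pk - P0" "PM - P0"]
    by simp_all
  moreover have "d \<le> inner e (PM - Pj)" "d \<le> inner e (Pk - PM)"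
    using spaced dist_eq_inner_diff_if_on_line[OF e] line sorted by simp_all
  moreover have "0 < d"
    using near(1) norm_ge_zero[of "Pj - \<gamma> tj"] \<delta>(1) by linarith
  ultimately show False
  proof (cases "0 \<le> inner (rot90 (tangent tM)) e")
    case True
    then show False
      by (intro far_side_point_not_near[OF t(2,1) e near(2,1) _ _ _ \<delta>])
        (use \<open>cross2 e (Pj - PM) = 0\<close> \<open>d \<le> inner e (PM - Pj)\<close> \<open>0 < d\<close>
          in \<open>auto simp: inner_diff_right intro: mult_nonneg_nonpos\<close>)
  next
    case False
    then show False
      by (intro far_side_point_not_near[OF t(2,3) e near(2,3) _ _ _ \<delta>])
        (use \<open>cross2 e (Pk - PM) = 0\<close> \<open>d \<le> inner e (Pk - PM)\<close> \<open>0 < d\<close>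
          in \<open>auto intro: mult_nonpos_nonneg\<close>)
  qed
qed

lemma collinear_spaced_points_not_near:
  assumes "t1 \<in> {a..b}" "t2 \<in> {a..b}" "t3 \<in> {a..b}"
    and "norm (Q1 - \<gamma> t1) < \<delta>" "norm (Q2 - \<gamma> t2) < \<delta>" "norm (Q3 - \<gamma> t3) < \<delta>"
    and collinear: "cross2 (Q2 - Q1) (Q3 - Q1) = 0" and "Q1 \<noteq> Q2"
    and "d \<le> dist Q1 Q2" "d \<le> dist Q2 Q3" "d \<le> dist Q1 Q3"
    and \<delta>: "2 * \<delta> < d" "4 * R2 * \<delta> < (d - 2 * \<delta>)\<^sup>2"
  shows False
proof -
  define e where "e = (1 / norm (Q2 - Q1)) *\<^sub>R (Q2 - Q1)"
  have e: "norm e = 1"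
    using \<open>Q1 \<noteq> Q2\<close> by (simp add: e_def)
  define near where "near = (\<lambda>(t, Q). t \<in> {a..b} \<and> norm (Q - \<gamma> t) < \<delta> \<and> cross2 e (Q - Q1) = 0)"
  define P where "P = (\<lambda>x y z. near x \<longrightarrow> near y \<longrightarrow> near z \<longrightarrow>
    d \<le> dist (snd x) (snd y) \<longrightarrow> d \<le> dist (snd y) (snd z) \<longrightarrow> d \<le> dist (snd x) (snd z) \<longrightarrow> False)"
  have "P (t1, Q1) (t2, Q2) (t3, Q3)"
  proof (rule wlog_sorted3[where key="\<lambda>(t, Q). inner e Q"])
    show "P x y z" if "(\<lambda>(t, Q). inner e Q) x \<le> (\<lambda>(t, Q). inner e Q) y"
      "(\<lambda>(t, Q). inner e Q) y \<le> (\<lambda>(t, Q). inner e Q) z" for x y z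
    proof -
      obtain tj Pj tM PM tk Pk where "x = (tj, Pj)" "y = (tM, PM)" "z = (tk, Pk)"
        by (metis surj_pair)
      then show ?thesis
        using that middle_of_collinear_points_not_near[of tj tM tk e Pj Q1 PM Pk d \<delta>] e \<delta>
        unfolding P_def near_def by auto
    qed
    show "P x y z" if "P y x z" for x y z
      using that unfolding P_def by (auto simp: dist_commute)
    show "P x y z" if "P x z y" for x y z
      using that unfolding P_def by (auto simp: dist_commute)
  qed
  moreover have "cross2 e (Q - Q1) = 0" if "Q \<in> {Q1, Q2, Q3}" for Q
    using that collinear by (auto simp: e_def cross2_scaleR_left)
  ultimately show False
    using assms unfolding P_def near_def by simp
qed

lemma no_three_lattice_points_near:
  assumes P: "P1 \<in> lattice v0 v1 v2" "P2 \<in> lattice v0 v1 v2" "P3 \<in> lattice v0 v1 v2"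
    and distinct: "P1 \<noteq> P2" "P2 \<noteq> P3" "P1 \<noteq> P3"
    and t: "t1 \<in> {a..b}" "t2 \<in> {a..b}" "t3 \<in> {a..b}"
    and near: "norm (P1 - \<gamma> t1) < \<delta>" "norm (P2 - \<gamma> t2) < \<delta>" "norm (P3 - \<gamma> t3) < \<delta>"
    and \<delta>: "2 * \<delta> < lattice_mindist (lattice v0 v1 v2)"
      "4 * R2 * \<delta> < (lattice_mindist (lattice v0 v1 v2) - 2 * \<delta>)\<^sup>2"
    and area: "arclength b ^ 3 / (8 * R1) + 2 * arclength b * \<delta> + 3 * \<delta>\<^sup>2 \<le> lattice_area v1 v2"
  shows False
proof (cases "cross2 (P2 - P1) (P3 - P1) = 0")
  case True
  show False
    by (rule collinear_spaced_points_not_near[OF t near True distinct(1) _ _ _ \<delta>])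
      (use P distinct lattice_mindist_le_dist in blast)+
next
  case False
  have "lattice_area v1 v2 \<le> \<bar>cross2 (P2 - P1) (P3 - P1)\<bar>"
    by (rule lattice_area_le_abs_cross2[OF P False])
  also have "\<dots> < arclength b ^ 3 / (8 * R1) + 2 * arclength b * \<delta> + 3 * \<delta>\<^sup>2"
    by (rule abs_cross2_near_less[OF t near])
  finally show False
    using area by simp
qed

lemma lattice_points_near_finite_card_le_2:
  assumes \<delta>: "2 * \<delta> < lattice_mindist (lattice v0 v1 v2)"
      "4 * R2 * \<delta> < (lattice_mindist (lattice v0 v1 v2) - 2 * \<delta>)\<^sup>2"
    and area: "arclength b ^ 3 / (8 * R1) + 2 * arclength b * \<delta> + 3 * \<delta>\<^sup>2 \<le> lattice_area v1 v2"
  shows "finite {Q \<in> lattice v0 v1 v2. infdist Q (\<gamma> ` {a..b}) < \<delta>}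
    \<and> card {Q \<in> lattice v0 v1 v2. infdist Q (\<gamma> ` {a..b}) < \<delta>} \<le> 2"
proof (rule finite_card_le_2_if_no_three)
  have near: "\<exists>t\<in>{a..b}. norm (Q - \<gamma> t) < \<delta>" if "infdist Q (\<gamma> ` {a..b}) < \<delta>" for Q
    using infdist_less_imp_dist_less[OF _ that] a_le_b by (auto simp: dist_norm)
  fix P1 P2 P3
  assume P: "P1 \<in> {Q \<in> lattice v0 v1 v2. infdist Q (\<gamma> ` {a..b}) < \<delta>}"
    "P2 \<in> {Q \<in> lattice v0 v1 v2. infdist Q (\<gamma> ` {a..b}) < \<delta>}"
    "P3 \<in> {Q \<in> lattice v0 v1 v2. infdist Q (\<gamma> ` {a..b}) < \<delta>}"
    and distinct: "P1 \<noteq> P2" "P2 \<noteq> P3" "P1 \<noteq> P3"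
  then obtain t1 t2 t3 where t: "t1 \<in> {a..b}" "t2 \<in> {a..b}" "t3 \<in> {a..b}"
    "norm (P1 - \<gamma> t1) < \<delta>" "norm (P2 - \<gamma> t2) < \<delta>" "norm (P3 - \<gamma> t3) < \<delta>"
    using near by (metis (no_types, lifting) mem_Collect_eq)
  show False
    by (rule no_three_lattice_points_near[OF _ _ _ distinct t \<delta> area]) (use P in auto)
qed

end

theorem theorem7p6:
  fixes \<gamma> \<gamma>1 \<gamma>2 :: "real \<Rightarrow> real^2" and a b R1 R2 \<delta> :: real and v0 v1 v2 :: "real^2"
  assumes ab: "a < b"
    and d1: "\<And>t. t \<in> {a..b} \<Longrightarrow> (\<gamma> has_vector_derivative \<gamma>1 t) (at t within {a..b})"
    and d2: "\<And>t. t \<in> {a..b} \<Longrightarrow> (\<gamma>1 has_vector_derivative \<gamma>2 t) (at t within {a..b})"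
    and C2: "continuous_on {a..b} \<gamma>2"
    and nz1: "\<And>t. t \<in> {a..b} \<Longrightarrow> \<gamma>1 t \<noteq> 0"
    and nz2: "\<And>t. t \<in> {a..b} \<Longrightarrow> \<gamma>2 t \<noteq> 0"
    and kpos: "\<And>t. t \<in> {a..b} \<Longrightarrow> curvature \<gamma>1 \<gamma>2 t > 0"
    and arc: "inj_on \<gamma> {a..b}"
    and convex_arc: "\<exists>K. convex K \<and> \<gamma> ` {a..b} \<subseteq> frontier K"
    and total_curv: "integral {a..b} (\<lambda>t. curvature \<gamma>1 \<gamma>2 t * norm (\<gamma>1 t)) \<le> pi"
    and R1pos: "0 < R1" and R12: "R1 \<le> R2"
    and rho: "\<And>t. t \<in> {a..b} \<Longrightarrow> R1 \<le> 1 / curvature \<gamma>1 \<gamma>2 t \<and> 1 / curvature \<gamma>1 \<gamma>2 t \<le> R2"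
    and indep: "cross2 v1 v2 \<noteq> 0"
    and dpos: "0 < \<delta>"
    and dsmall: "\<delta> < (lattice_mindist (lattice v0 v1 v2))\<^sup>2 /
        (2 * (R2 + lattice_mindist (lattice v0 v1 v2)
          + sqrt ((R2 + lattice_mindist (lattice v0 v1 v2))\<^sup>2 - (lattice_mindist (lattice v0 v1 v2))\<^sup>2)))"
    and main: "(integral {a..b} (\<lambda>t. norm (\<gamma>1 t)))^3 / (8 * R1)
        + 2 * integral {a..b} (\<lambda>t. norm (\<gamma>1 t)) * \<delta> + 3 * \<delta>\<^sup>2 \<le> lattice_area v1 v2"
  shows "finite {Q \<in> lattice v0 v1 v2. infdist Q (\<gamma> ` {a..b}) < \<delta>}
    \<and> card {Q \<in> lattice v0 v1 v2. infdist Q (\<gamma> ` {a..b}) < \<delta>} \<le> 2"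
proof -
  interpret bounded_curvature_arc \<gamma> \<gamma>1 \<gamma>2 a b R1 R2
    using ab d1 d2 C2 nz1 total_curv R1pos rho by unfold_locales auto
  show ?thesis
  proof (rule lattice_points_near_finite_card_le_2)
    show "2 * \<delta> < lattice_mindist (lattice v0 v1 v2)"
      "4 * R2 * \<delta> < (lattice_mindist (lattice v0 v1 v2) - 2 * \<delta>)\<^sup>2"
      using small_delta_bounds[OF R2_pos lattice_mindist_nonneg[OF indep] dsmall] by auto
    show "arclength b ^ 3 / (8 * R1) + 2 * arclength b * \<delta> + 3 * \<delta>\<^sup>2 \<le> lattice_area v1 v2"
      using main by (simp add: arclength_def speed_def[abs_def])
  qed
qed

end
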